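(* Let $n\ge2$, let $A\in\mathbb R^{n\times n}$ have $A_{i,i+1}=1$ ($i=1,\dots,n-1$) and all other entries $0$, and $b=(0,\dots,0,1)^T$ with entries $b_i$. Let $F_i,\bar F_i,P_i$ ($i=1,\dots,n$) and $Q$ be symmetric real $n\times n$ matrices, $P_{n+1}=0$, and $G,\bar G\in\mathbb R^{n\times n}$ with $i$th rows $G_i,\bar G_i$, such that for $i=1,\dots,n$ $$\bar F_i = F_i + P_{i+1} - \mathbf LP_i - b_iQ,\qquad \bar G_i = G_i - 2b^TP_iA.$$ Then $$\mathbf X_0P_1A = \sum_{i=1}^{n-1}\mathbf X_iF_iA + \tfrac12G - \sum_{i=1}^{n-1}\mathbf X_i\bar F_iA - \tfrac12\bar G.$$
   Context: Here $\mathbf L:\mathbb R^{n\times n}\to\mathbb R^{n\times n}$ is $\mathbf LP=A^TPA$, with $\mathbf L^0P=P$ and $\mathbf L^{k+1}=\mathbf L\circ\mathbf L^k$. $\mathbf X_0P$ is the $n\times n$ matrix whose $k$th row ($k=1,\dots,n$) is the $n$th row of $\mathbf L^{k-1}P$, and $\mathbf X_iP=(A^T)^i\mathbf X_0P$ for $i\ge1$. *)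

theory Defs
  imports "Jordan_Normal_Form.Matrix"
begin

(* Matrices are Jordan_Normal_Form matrices; indices are 0-based there, so the
   paper's (1-based) entry/row i corresponds to index i-1. *)

definition Amat :: "nat \<Rightarrow> real mat" where
  "Amat n = mat n n (\<lambda>(i,j). if j = i + 1 then 1 else 0)"

definition bvec :: "nat \<Rightarrow> real vec" where
  "bvec n = vec n (\<lambda>i. if i = n - 1 then 1 else 0)"

definition bT :: "nat \<Rightarrow> real mat" where
  "bT n = mat_of_rows n [bvec n]"

definition Lop :: "nat \<Rightarrow> real mat \<Rightarrow> real mat" where
  "Lop n P = transpose_mat (Amat n) * P * Amat n"

definition X0 :: "nat \<Rightarrow> real mat \<Rightarrow> real mat" where
  "X0 n P = mat n n (\<lambda>(k,j). ((Lop n ^^ k) P) $$ (n - 1, j))"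

definition Xop :: "nat \<Rightarrow> nat \<Rightarrow> real mat \<Rightarrow> real mat" where
  "Xop n i P = (transpose_mat (Amat n) ^\<^sub>m i) * X0 n P"

fun msum :: "nat \<Rightarrow> (nat \<Rightarrow> real mat) \<Rightarrow> nat \<Rightarrow> real mat" where
  "msum n f 0 = 0\<^sub>m n n"
| "msum n f (Suc k) = msum n f k + f (Suc k)"

end

theory Submission
  imports Defs
begin

text \<open>
  A is the shift matrix: right multiplication by A shifts columns to the right, left
  multiplication by A^T shifts rows down, and L^m shifts all entries diagonally by m.
  Hence, with the 0-based indices of the matrix library, entry (k, j) of X_i M A is
  entry (n - 1, j - 1) of L^(k - i) M, or 0 if j = 0 or k < i.  For i < n we have b_i = 0,
  so F_i - Fbar_i = L P_i - P_(i+1), and the sum of the entries (k, j) of X_i (F_i - Fbar_i) A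
  telescopes to entry (n - 1, j - 1) of L^k P_1 - P_(k+1).  The missing P_(k+1) comes from
  (G - Gbar) / 2, whose row k is the row of b^T P_(k+1) A.
\<close>

lemma Amat_carrier [simp]: "Amat n \<in> carrier_mat n n"
  and dim_row_Amat [simp]: "dim_row (Amat n) = n"
  and dim_col_Amat [simp]: "dim_col (Amat n) = n"
  by (simp_all add: Amat_def)

lemma sum_shift_delta:
  "j < n \<Longrightarrow> (\<Sum>l<n. if j = Suc l then f l else 0) = (if j = 0 then 0 else f (j - 1))"
  by (cases j) auto

lemma mult_Amat_index:
  assumes "M \<in> carrier_mat m n" "i < m" "j < n"
  shows "(M * Amat n) $$ (i, j) = (if j = 0 then 0 else M $$ (i, j - 1))"
  using assms sum_shift_delta[of j n "\<lambda>l. M $$ (i, l)"]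
  by (simp add: Amat_def scalar_prod_def atLeast0LessThan if_distrib[of "\<lambda>x. _ * x"] cong: if_cong)

lemma transpose_Amat_mult_index:
  assumes "M \<in> carrier_mat n m" "i < n" "j < m"
  shows "(transpose_mat (Amat n) * M) $$ (i, j) = (if i = 0 then 0 else M $$ (i - 1, j))"
  using assms sum_shift_delta[of i n "\<lambda>l. M $$ (l, j)"]
  by (simp add: Amat_def scalar_prod_def atLeast0LessThan if_distrib[of "\<lambda>x. x * _"] cong: if_cong)

lemma bT_mult_index:
  assumes "M \<in> carrier_mat n m" "0 < n" "j < m"
  shows "(bT n * M) $$ (0, j) = M $$ (n - 1, j)"
  using assms by (simp add: bT_def bvec_def scalar_prod_def atLeast0LessThan if_distrib[of "\<lambda>x. x * _"] cong: if_cong)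

lemma transpose_Amat_pow_mult_index:
  assumes "M \<in> carrier_mat n m" "i < n" "j < m"
  shows "(transpose_mat (Amat n) ^\<^sub>m k * M) $$ (i, j) = (if k \<le> i then M $$ (i - k, j) else 0)"
  using assms
proof (induction k arbitrary: M i)
  case 0
  then show ?case by simp
next
  case (Suc k)
  have AM: "transpose_mat (Amat n) * M \<in> carrier_mat n m"
    using Suc.prems(1) by (intro mult_carrier_mat[of _ n n]) simp_all
  have "(transpose_mat (Amat n) ^\<^sub>m Suc k * M) $$ (i, j)
    = (transpose_mat (Amat n) ^\<^sub>m k * (transpose_mat (Amat n) * M)) $$ (i, j)"
    using Suc.prems(1) by (simp add: assoc_mult_mat[of _ n n _ n _ m])
  also have "\<dots> = (if k \<le> i then (transpose_mat (Amat n) * M) $$ (i - k, j) else 0)"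
    using AM Suc.prems(2,3) by (rule Suc.IH)
  also have "\<dots> = (if Suc k \<le> i then M $$ (i - Suc k, j) else 0)"
    using transpose_Amat_mult_index[OF Suc.prems(1), of "i - k" j] Suc.prems by auto
  finally show ?case .
qed

lemma dim_Lop [simp]: "dim_row (Lop n M) = n" "dim_col (Lop n M) = n"
  by (simp_all add: Lop_def)

lemma Lop_carrier: "Lop n M \<in> carrier_mat n n"
  by (rule carrier_matI) simp_all

lemma Lop_pow_carrier: "M \<in> carrier_mat n n \<Longrightarrow> (Lop n ^^ m) M \<in> carrier_mat n n"
  by (cases m) (simp_all add: Lop_carrier)

lemma dim_Lop_pow [simp]:
  "M \<in> carrier_mat n n \<Longrightarrow> dim_row ((Lop n ^^ m) M) = n"
  "M \<in> carrier_mat n n \<Longrightarrow> dim_col ((Lop n ^^ m) M) = n"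
  using Lop_pow_carrier by blast+

lemma Lop_index:
  assumes "M \<in> carrier_mat n n" "a < n" "b < n"
  shows "Lop n M $$ (a, b) = (if a = 0 \<or> b = 0 then 0 else M $$ (a - 1, b - 1))"
proof -
  have AM: "transpose_mat (Amat n) * M \<in> carrier_mat n n"
    using assms(1) by (intro mult_carrier_mat[of _ n n]) simp_all
  show ?thesis
    using mult_Amat_index[OF AM assms(2,3)] transpose_Amat_mult_index[OF assms(1,2)] assms(3)
    unfolding Lop_def by auto
qed

lemma Lop_pow_index:
  assumes "M \<in> carrier_mat n n" "a < n" "b < n"
  shows "(Lop n ^^ m) M $$ (a, b) = (if m \<le> a \<and> m \<le> b then M $$ (a - m, b - m) else 0)"
  using assms(2,3)
proof (induction m arbitrary: a b)
  case 0
  then show ?case by simp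
next
  case (Suc m)
  have "(Lop n ^^ Suc m) M $$ (a, b) = Lop n ((Lop n ^^ m) M) $$ (a, b)"
    by simp
  also have "\<dots> = (if a = 0 \<or> b = 0 then 0 else (Lop n ^^ m) M $$ (a - 1, b - 1))"
    using Lop_pow_carrier[OF assms(1)] Suc.prems by (rule Lop_index)
  also have "\<dots> = (if Suc m \<le> a \<and> Suc m \<le> b then M $$ (a - Suc m, b - Suc m) else 0)"
    using Suc.IH[of "a - 1" "b - 1"] Suc.prems by auto
  finally show ?case .
qed

lemma Xop_zero: "Xop n 0 M = X0 n M"
  by (simp add: Xop_def X0_def)

lemma Xop_mult_Amat_index:
  assumes "k < n" "j < n"
  shows "(Xop n i M * Amat n) $$ (k, j) = (if j = 0 \<or> k < i then 0 else (Lop n ^^ (k - i)) M $$ (n - 1, j - 1))"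
proof -
  have X0: "X0 n M \<in> carrier_mat n n" by (simp add: X0_def)
  then have "Xop n i M \<in> carrier_mat n n"
    unfolding Xop_def by (intro mult_carrier_mat[of _ n n]) simp_all
  then have "(Xop n i M * Amat n) $$ (k, j) = (if j = 0 then 0 else Xop n i M $$ (k, j - 1))"
    using assms by (rule mult_Amat_index)
  also have "\<dots> = (if j = 0 \<or> k < i then 0 else X0 n M $$ (k - i, j - 1))"
    using assms unfolding Xop_def by (auto simp: transpose_Amat_pow_mult_index[OF X0])
  finally show ?thesis
    using assms by (simp add: X0_def)
qed

lemma Lop_pow_add_minus_Lop:
  assumes "F \<in> carrier_mat n n" "R \<in> carrier_mat n n" "P \<in> carrier_mat n n"
  shows "(Lop n ^^ m) (F + R - Lop n P) = (Lop n ^^ m) F + (Lop n ^^ m) R - (Lop n ^^ Suc m) P"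
proof -
  have FRP: "F + R - Lop n P \<in> carrier_mat n n" using Lop_carrier by (rule minus_carrier_mat)
  show ?thesis
  proof (rule eq_matI)
    fix a b assume "a < dim_row ((Lop n ^^ m) F + (Lop n ^^ m) R - (Lop n ^^ Suc m) P)"
      "b < dim_col ((Lop n ^^ m) F + (Lop n ^^ m) R - (Lop n ^^ Suc m) P)"
    then have ab: "a < n" "b < n"
      by simp_all
    show "(Lop n ^^ m) (F + R - Lop n P) $$ (a, b) =
      ((Lop n ^^ m) F + (Lop n ^^ m) R - (Lop n ^^ Suc m) P) $$ (a, b)"
      using ab assms
      by (simp add: Lop_pow_index[OF FRP] Lop_pow_index[OF assms(1)] Lop_pow_index[OF assms(2)]
          Lop_pow_index[OF assms(3)] Lop_index[OF assms(3)] del: funpow.simps)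
  qed (use FRP in simp_all)
qed

lemma msum_carrier:
  "(\<And>i. i \<in> {1..k} \<Longrightarrow> f i \<in> carrier_mat n n) \<Longrightarrow> msum n f k \<in> carrier_mat n n"
  by (induction k) auto

lemma msum_index:
  assumes "\<And>i. i \<in> {1..k} \<Longrightarrow> f i \<in> carrier_mat n n" "a < n" "b < n"
  shows "msum n f k $$ (a, b) = (\<Sum>i=1..k. f i $$ (a, b))"
  using assms(1)
proof (induction k)
  case 0
  then show ?case using assms(2,3) by simp
next
  case (Suc k)
  have "f (Suc k) \<in> carrier_mat n n"
    using Suc.prems by auto
  then have "dim_row (f (Suc k)) = n" "dim_col (f (Suc k)) = n"
    by auto
  then show ?case
    using Suc assms(2,3) by simp
qed

lemma Xop_mult_Amat_carrier: "Xop n i M * Amat n \<in> carrier_mat n n"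
  unfolding Xop_def by (intro mult_carrier_mat[of _ n n]) (simp_all add: X0_def)

lemma msum_Xop_mult_Amat_telescope:
  assumes "k \<le> m" "k < n" "j < n"
    and F: "\<And>i. i \<in> {1..m} \<Longrightarrow> F i \<in> carrier_mat n n"
    and P: "\<And>i. i \<in> {1..Suc m} \<Longrightarrow> P i \<in> carrier_mat n n"
    and Fbar: "\<And>i. i \<in> {1..m} \<Longrightarrow> Fbar i = F i + P (Suc i) - Lop n (P i)"
  shows "msum n (\<lambda>i. Xop n i (F i) * Amat n) m $$ (k, j) - msum n (\<lambda>i. Xop n i (Fbar i) * Amat n) m $$ (k, j)
    = (if j = 0 then 0 else (Lop n ^^ k) (P 1) $$ (n - 1, j - 1) - P (Suc k) $$ (n - 1, j - 1))"
proof -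
  define g where "g i = (Lop n ^^ (Suc k - i)) (P i) $$ (n - 1, j - 1)" for i
  have "(Xop n i (F i) * Amat n) $$ (k, j) - (Xop n i (Fbar i) * Amat n) $$ (k, j)
    = (if j = 0 \<or> k < i then 0 else g i - g (Suc i))" if i: "i \<in> {1..m}" for i
  proof -
    have carriers: "F i \<in> carrier_mat n n" "P (Suc i) \<in> carrier_mat n n" "P i \<in> carrier_mat n n"
      using i F P by auto
    have "(Lop n ^^ (k - i)) (Fbar i) $$ (n - 1, j - 1) = (Lop n ^^ (k - i)) (F i) $$ (n - 1, j - 1)
      + (Lop n ^^ (k - i)) (P (Suc i)) $$ (n - 1, j - 1) - (Lop n ^^ Suc (k - i)) (P i) $$ (n - 1, j - 1)"
      unfolding Fbar[OF i] Lop_pow_add_minus_Lop[OF carriers]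
      using assms(2,3) carriers by (simp del: funpow.simps)
    then show ?thesis
      using assms(2,3) by (auto simp: Xop_mult_Amat_index g_def Suc_diff_le simp del: funpow.simps)
  qed
  moreover have "msum n (\<lambda>i. Xop n i (H i) * Amat n) m $$ (k, j) = (\<Sum>i=1..m. (Xop n i (H i) * Amat n) $$ (k, j))"
    for H :: "nat \<Rightarrow> real mat"
    by (rule msum_index) (use assms(2,3) Xop_mult_Amat_carrier in auto)
  ultimately have "msum n (\<lambda>i. Xop n i (F i) * Amat n) m $$ (k, j) - msum n (\<lambda>i. Xop n i (Fbar i) * Amat n) m $$ (k, j)
    = (\<Sum>i=1..m. if j = 0 \<or> k < i then 0 else g i - g (Suc i))"
    by (simp add: sum_subtractf[symmetric])
  also have "\<dots> = (if j = 0 then 0 else \<Sum>i=1..k. g i - g (Suc i))"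
    using assms(1) by (auto intro: sum.mono_neutral_cong_right)
  also have "\<dots> = (if j = 0 then 0 else g 1 - g (Suc k))"
    using sum_Suc_diff[of 1 k "\<lambda>i. - g i"] by (simp add: sum_negf[symmetric])
  finally show ?thesis
    by (simp add: g_def)
qed

lemma bT_mult_mult_Amat_index:
  assumes "M \<in> carrier_mat n n" "j < n"
  shows "(bT n * M * Amat n) $$ (0, j) = (if j = 0 then 0 else M $$ (n - 1, j - 1))"
proof -
  have "bT n * M \<in> carrier_mat 1 n"
    unfolding bT_def using assms(1) by (intro mult_carrier_mat[of _ 1 n] carrier_matI) simp_all
  then show ?thesis
    using assms by (simp add: mult_Amat_index bT_mult_index)
qed

lemma index_row_minus_bT_mult_mult_Amat:
  assumes "G \<in> carrier_mat n n" "Gbar \<in> carrier_mat n n" "M \<in> carrier_mat n n" "k < n" "j < n"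
    and "row Gbar k = row G k - c \<cdot>\<^sub>v row (bT n * M * Amat n) 0"
  shows "Gbar $$ (k, j) = G $$ (k, j) - c * (if j = 0 then 0 else M $$ (n - 1, j - 1))"
proof -
  have "row Gbar k $ j = (row G k - c \<cdot>\<^sub>v row (bT n * M * Amat n) 0) $ j"
    using assms(6) by simp
  then show ?thesis
    using assms(1-5) by (simp add: bT_mult_mult_Amat_index[OF assms(3,5), symmetric] bT_def)
qed

theorem theorem4p6:
  fixes n :: nat
    and F Fbar P :: "nat \<Rightarrow> real mat"
    and Q G Gbar :: "real mat"
  assumes n2: "n \<ge> 2"
    and F_dim: "\<And>i. i \<in> {1..n} \<Longrightarrow> F i \<in> carrier_mat n n \<and> transpose_mat (F i) = F i"
    and Fbar_dim: "\<And>i. i \<in> {1..n} \<Longrightarrow> Fbar i \<in> carrier_mat n n \<and> transpose_mat (Fbar i) = Fbar i"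
    and P_dim: "\<And>i. i \<in> {1..n} \<Longrightarrow> P i \<in> carrier_mat n n \<and> transpose_mat (P i) = P i"
    and Q_dim: "Q \<in> carrier_mat n n" and Q_sym: "transpose_mat Q = Q"
    and P_last: "P (n + 1) = 0\<^sub>m n n"
    and G_dim: "G \<in> carrier_mat n n" and Gbar_dim: "Gbar \<in> carrier_mat n n"
    and Fbar_eq: "\<And>i. i \<in> {1..n} \<Longrightarrow>
       Fbar i = F i + P (i + 1) - Lop n (P i) - (bvec n $ (i - 1)) \<cdot>\<^sub>m Q"
    and Gbar_eq: "\<And>i. i \<in> {1..n} \<Longrightarrow>
       row Gbar (i - 1) = row G (i - 1) - 2 \<cdot>\<^sub>v row (bT n * P i * Amat n) 0"
  shows "X0 n (P 1) * Amat n =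
           msum n (\<lambda>i. Xop n i (F i) * Amat n) (n - 1) + (1/2) \<cdot>\<^sub>m G
         - msum n (\<lambda>i. Xop n i (Fbar i) * Amat n) (n - 1) - (1/2) \<cdot>\<^sub>m Gbar"
proof -
  let ?S = "\<lambda>H. msum n (\<lambda>i. Xop n i (H i) * Amat n) (n - 1)"
  have P_carrier: "P i \<in> carrier_mat n n" if "i \<in> {1..Suc (n - 1)}" for i
    using P_dim that n2 by auto
  have Fbar_interior: "Fbar i = F i + P (Suc i) - Lop n (P i)" if i: "i \<in> {1..n - 1}" for i
  proof -
    have "i - 1 < n" "i - 1 \<noteq> n - 1" using i by auto
    then have "bvec n $ (i - 1) = 0" by (simp add: bvec_def)
    moreover have "F i + P (Suc i) - Lop n (P i) \<in> carrier_mat n n"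
      using Lop_carrier by (rule minus_carrier_mat)
    ultimately show ?thesis
      using Fbar_eq[of i] i Q_dim by (auto intro!: eq_matI)
  qed
  have S_carrier: "?S H \<in> carrier_mat n n" for H
    by (rule msum_carrier) (rule Xop_mult_Amat_carrier)
  then have S_dims: "dim_row (?S H) = n" "dim_col (?S H) = n" for H
    by auto
  show ?thesis
  proof (rule eq_matI)
    fix k j assume "k < dim_row (?S F + (1/2) \<cdot>\<^sub>m G - ?S Fbar - (1/2) \<cdot>\<^sub>m Gbar)"
      "j < dim_col (?S F + (1/2) \<cdot>\<^sub>m G - ?S Fbar - (1/2) \<cdot>\<^sub>m Gbar)"
    then have k: "k < n" and j: "j < n" using Gbar_dim by auto
    have "?S F $$ (k, j) - ?S Fbar $$ (k, j)
      = (if j = 0 then 0 else (Lop n ^^ k) (P 1) $$ (n - 1, j - 1) - P (Suc k) $$ (n - 1, j - 1))"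
      using k j F_dim P_carrier Fbar_interior by (intro msum_Xop_mult_Amat_telescope) auto
    moreover have "Gbar $$ (k, j) = G $$ (k, j) - 2 * (if j = 0 then 0 else P (Suc k) $$ (n - 1, j - 1))"
      using G_dim Gbar_dim P_carrier k j Gbar_eq[of "Suc k"] by (intro index_row_minus_bT_mult_mult_Amat) auto
    ultimately show "(X0 n (P 1) * Amat n) $$ (k, j) = (?S F + (1/2) \<cdot>\<^sub>m G - ?S Fbar - (1/2) \<cdot>\<^sub>m Gbar) $$ (k, j)"
      using k j S_dims G_dim Gbar_dim
      by (auto simp: Xop_zero[symmetric] Xop_mult_Amat_index algebra_simps)
  qed (use S_dims Gbar_dim in \<open>simp_all add: X0_def\<close>)
qed

end
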